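(* Let $p$ be a prime, $e\ge1$, $q=p^e$, $0\le\ell\le e-1$, $m\ge n$, and let $a,c\in\mathbb{F}_q$. Suppose $\varphi_1,\dots,\varphi_m\in\mathbb{F}_q^n$ is an $\ell$-Galois $(a,0,c)$-equiangular tight frame for $\mathbb{F}_q^n$. Then $a=c$ or $a=0$.
   Context: For $\mathbf{x},\mathbf{y}\in\mathbb{F}_q^n$, $(\mathbf{x},\mathbf{y})_\ell=\sum_{i=1}^n x_i^{p^\ell}y_i$. Let $\Phi$ be the $n\times m$ matrix with columns $\varphi_i$ and $\Phi^{\dagger_\ell}$ the transpose of the matrix obtained by raising each entry of $\Phi$ to the power $p^\ell$. The sequence $\{\varphi_i\}_{i=1}^m$ is an $\ell$-Galois $(a,b,c)$-equiangular tight frame for $\mathbb{F}_q^n$ if: it spans $\mathbb{F}_q^n$; $\Phi\Phi^{\dagger_\ell}=cI_n$; $(\varphi_i,\varphi_i)_\ell=a$ for all $i$; and $(\varphi_i,\varphi_j)_\ell(\varphi_j,\varphi_i)_\ell=b$ for all $i\ne j$. *)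

theory Defs
  imports "HOL-Analysis.Analysis"
begin

definition galois_ip :: "nat \<Rightarrow> nat \<Rightarrow> 'a::field ^'n \<Rightarrow> 'a ^'n \<Rightarrow> 'a" where
  "galois_ip p l x y = (\<Sum>i\<in>UNIV. (x $ i) ^ (p ^ l) * (y $ i))"

definition frame_matrix :: "('m \<Rightarrow> 'a ^'n) \<Rightarrow> 'a ^'m ^'n" where
  "frame_matrix \<phi> = (\<chi> i j. \<phi> j $ i)"

definition galois_dagger :: "nat \<Rightarrow> nat \<Rightarrow> 'a::field ^'m ^'n \<Rightarrow> 'a ^'n ^'m" where
  "galois_dagger p l A = transpose (\<chi> i j. (A $ i $ j) ^ (p ^ l))"

definition galois_etf ::
  "nat \<Rightarrow> nat \<Rightarrow> ('m::finite \<Rightarrow> 'a::field ^'n) \<Rightarrow> 'a \<Rightarrow> 'a \<Rightarrow> 'a \<Rightarrow> bool" where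
  "galois_etf p l \<phi> a b c \<longleftrightarrow>
     vec.span (range \<phi>) = UNIV \<and>
     frame_matrix \<phi> ** galois_dagger p l (frame_matrix \<phi>) = mat c \<and>
     (\<forall>i. galois_ip p l (\<phi> i) (\<phi> i) = a) \<and>
     (\<forall>i j. i \<noteq> j \<longrightarrow> galois_ip p l (\<phi> i) (\<phi> j) * galois_ip p l (\<phi> j) (\<phi> i) = b)"

end

theory Submission
  imports Defs
begin

(* The Gram matrix G = Phi^dagger Phi has entries (phi_i, phi_j)_l, and tightness
   Phi Phi^dagger = c I gives G^2 = Phi^dagger (c I) Phi = c G.  On the diagonal,
   b = 0 kills every product G_ij G_ji with j ~= i, so a^2 = c a. *)

lemma gram_matrix_entry:
  "(galois_dagger p l (frame_matrix \<phi>) ** frame_matrix \<phi>) $ i $ j = galois_ip p l (\<phi> i) (\<phi> j)"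
  by (simp add: galois_dagger_def frame_matrix_def matrix_matrix_mult_def galois_ip_def transpose_def)

lemma matrix_mul_mat_middle:
  fixes A :: "'a::comm_semiring_1 ^ 'n ^ 'm"
  shows "A ** mat c ** B = (\<chi> i j. (A ** B) $ i $ j * c)"
proof -
  have right_scalar: "A ** mat c = (\<chi> i j. A $ i $ j * c)"
    by (simp add: matrix_matrix_mult_def mat_def vec_eq_iff if_distrib if_distribR cong: if_cong)
  show ?thesis
    unfolding right_scalar
    by (simp add: matrix_matrix_mult_def vec_eq_iff sum_distrib_left mult_ac)
qed

lemma matrix_square_diagonal:
  fixes X :: "'a::comm_semiring_1 ^ 'n ^ 'n"
  shows "(X ** X) $ i $ i = X $ i $ i * X $ i $ i + (\<Sum>j\<in>UNIV - {i}. X $ i $ j * X $ j $ i)"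
  by (simp add: matrix_matrix_mult_def sum.remove)

lemma diagonal_entry_of_scaled_idempotent:
  fixes X :: "'a::idom ^ 'n ^ 'n"
  assumes square: "X ** X = (\<chi> i j. X $ i $ j * c)"
    and off_diagonal: "\<And>j. j \<noteq> i \<Longrightarrow> X $ i $ j * X $ j $ i = 0"
  shows "X $ i $ i = 0 \<or> X $ i $ i = c"
proof -
  have "(\<Sum>j\<in>UNIV - {i}. X $ i $ j * X $ j $ i) = 0"
    using off_diagonal by (intro sum.neutral) auto
  then have "X $ i $ i * X $ i $ i = (X ** X) $ i $ i"
    using matrix_square_diagonal[of X i] by simp
  also have "\<dots> = X $ i $ i * c"
    unfolding square by simp
  finally show ?thesis
    by auto
qed

theorem mainTheorem4:
  fixes \<phi> :: "'m::finite \<Rightarrow> ('a::{field,finite}) ^'n"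
    and p e l :: nat and a c :: 'a
  assumes "prime p" and "e \<ge> 1" and "CARD('a) = p ^ e"
    and "l \<le> e - 1"
    and "CARD('m) \<ge> CARD('n)"
    and "galois_etf p l \<phi> a 0 c"
  shows "a = c \<or> a = 0"
proof -
  define F where "F = frame_matrix \<phi>"
  define G where "G = galois_dagger p l F ** F"
  have tight: "F ** galois_dagger p l F = mat c"
    and diagonal: "\<And>i. galois_ip p l (\<phi> i) (\<phi> i) = a"
    and off_diagonal: "\<And>i j. i \<noteq> j \<Longrightarrow> galois_ip p l (\<phi> i) (\<phi> j) * galois_ip p l (\<phi> j) (\<phi> i) = 0"
    using assms(6) unfolding galois_etf_def F_def by auto
  have entry: "G $ i $ j = galois_ip p l (\<phi> i) (\<phi> j)" for i j
    unfolding G_def F_def by (rule gram_matrix_entry)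
  have "G ** G = galois_dagger p l F ** mat c ** F"
    unfolding G_def tight[symmetric] by (simp add: matrix_mul_assoc)
  then have square: "G ** G = (\<chi> i j. G $ i $ j * c)"
    unfolding matrix_mul_mat_middle G_def .
  fix i :: 'm
  have "G $ i $ i = 0 \<or> G $ i $ i = c"
    by (intro diagonal_entry_of_scaled_idempotent[OF square]) (simp add: entry off_diagonal)
  then show ?thesis
    using entry diagonal by auto
qed

end
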